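(* Let $D\ge2$ be square-free, $K=\mathbb{Q}(\sqrt D)$ with ring of integers $\mathbb{Z}_K$, and let $u_D$ be defined as follows: fix the real embedding with $\sqrt D>0$, let $u_f$ be the fundamental unit of $K$ that is $>1$ under it, and set $u_D=u_f^2$ if $u_f$ has norm $-1$ and $u_D=u_f$ otherwise. For $r\ge1$ let $d_r=1+u_D^r+u_D^{-r}\in\mathbb{Z}$, and let $d_r'=d_r$ if $d_r$ is odd and $d_r'=2d_r$ if $d_r$ is even. Then the multiplicative order of $u_D$ in $(\mathbb{Z}_K/d_r'\mathbb{Z}_K)^\times$ is $3r\,\frac{d_r'}{d_r}$; that is, it is $3r$ if $d_r$ is odd and $6r$ if $d_r$ is even. *)

theory Defs
  imports Complex_Main "HOL-Computational_Algebra.Polynomial" "HOL-Computational_Algebra.Squarefree"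
begin

text \<open>We work inside the real numbers, via the real embedding of K = Q(sqrt D)
  with sqrt D > 0.\<close>

definition qfield :: "nat \<Rightarrow> real set" where
  "qfield D = {x. \<exists>p q. p \<in> \<rat> \<and> q \<in> \<rat> \<and> x = p + q * sqrt (real D)}"

definition alg_int :: "real \<Rightarrow> bool" where
  "alg_int x \<longleftrightarrow> (\<exists>p :: int poly. lead_coeff p = 1 \<and> poly (map_poly real_of_int p) x = 0)"

definition ring_of_ints :: "nat \<Rightarrow> real set" where
  "ring_of_ints D = {x \<in> qfield D. alg_int x}"

definition qconj :: "nat \<Rightarrow> real \<Rightarrow> real" where
  "qconj D x = (THE y. \<exists>p q. p \<in> \<rat> \<and> q \<in> \<rat> \<and> x = p + q * sqrt (real D) \<and> y = p - q * sqrt (real D))"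

definition qnorm :: "nat \<Rightarrow> real \<Rightarrow> real" where
  "qnorm D x = x * qconj D x"

definition qunits :: "nat \<Rightarrow> real set" where
  "qunits D = {x \<in> ring_of_ints D. x \<noteq> 0 \<and> inverse x \<in> ring_of_ints D}"

definition fund_unit :: "nat \<Rightarrow> real" where
  "fund_unit D = (LEAST u. u \<in> qunits D \<and> u > 1)"

definition uD :: "nat \<Rightarrow> real" where
  "uD D = (if qnorm D (fund_unit D) = -1 then (fund_unit D)^2 else fund_unit D)"

text \<open>d_r = 1 + u_D^r + u_D^(-r), an integer.\<close>
definition d_r :: "nat \<Rightarrow> nat \<Rightarrow> int" where
  "d_r D r = \<lfloor>1 + uD D ^ r + inverse (uD D) ^ r\<rfloor>"

definition d_r' :: "nat \<Rightarrow> nat \<Rightarrow> int" where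
  "d_r' D r = (if odd (d_r D r) then d_r D r else 2 * d_r D r)"

definition cong_OK :: "nat \<Rightarrow> int \<Rightarrow> real \<Rightarrow> real \<Rightarrow> bool" where
  "cong_OK D m x y \<longleftrightarrow> (x - y) / real_of_int m \<in> ring_of_ints D"

definition ord_mod :: "nat \<Rightarrow> int \<Rightarrow> real \<Rightarrow> nat" where
  "ord_mod D m x = (LEAST n::nat. n > 0 \<and> cong_OK D m (x ^ n) 1)"

end

theory Submission
  imports Defs "HOL-Analysis.Kronecker_Approximation_Theorem"
begin

text \<open>Put \<open>v = u\<^sub>D\<^sup>r\<close>. Since \<open>v\<close> has norm 1, its conjugate is \<open>v\<^sup>-\<^sup>1\<close>, so \<open>d\<^sub>r = 1 + v + v\<^sup>-\<^sup>1\<close> satisfies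
  \<open>d\<^sub>r v = v\<^sup>2 + v + 1\<close> and hence \<open>v\<^sup>3 - 1 = d\<^sub>r v (v - 1) \<equiv> 0\<close> modulo \<open>d\<^sub>r\<close>. Conversely, if
  \<open>u\<^sub>D\<^sup>n \<equiv> 1\<close> modulo \<open>d\<^sub>r\<close> with \<open>0 < n < 2r\<close>, then \<open>(u\<^sub>D\<^sup>n - 1)/d\<^sub>r\<close> would be an integer of norm
  \<open>(2 - u\<^sub>D\<^sup>n - u\<^sub>D\<^sup>-\<^sup>n)/d\<^sub>r\<^sup>2\<close>, which lies strictly between \<open>-1\<close> and \<open>0\<close>; so the order is \<open>3r\<close>.
  For even \<open>d\<^sub>r\<close>, squaring \<open>v\<^sup>3 = 1 + d\<^sub>r y\<close> gives \<open>v\<^sup>6 \<equiv> 1\<close> modulo \<open>2d\<^sub>r\<close>, while \<open>v\<^sup>3 \<equiv> 1\<close> modulo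
  \<open>2d\<^sub>r\<close> would make \<open>(v - 1)/2\<close> integral and \<open>4\<close> divide the odd number \<open>N(v - 1) = 3 - d\<^sub>r\<close>.

  Integrality in \<open>\<rat>(\<surd>D)\<close> is decided by trace and norm (Gauss' lemma), and the fundamental unit
  exists because Pell's equation is solvable, by pigeonholing Dirichlet approximations of \<open>\<surd>D\<close>.\<close>

section \<open>Monic factors of monic integer polynomials\<close>

lemma rat_poly_common_denominator:
  fixes f :: "rat poly"
  obtains a :: int and A :: "int poly" where "a > 0" "map_poly of_int A = smult (of_int a) f"
proof (induction f arbitrary: thesis)
  case 0
  show ?case by (rule 0[of 1 0]) simp_all
next
  case (pCons c f)
  obtain a A where aA: "a > 0" "map_poly of_int A = smult (of_int a) f"
    using pCons.IH by blast
  obtain n k where nk: "quotient_of c = (n, k)" by (cases "quotient_of c")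
  have k: "k > 0" and c: "c = of_int n / of_int k"
    using quotient_of_denom_pos[OF nk] quotient_of_div[OF nk] by auto
  show ?case
  proof (rule pCons.prems)
    show "a * k > 0" using aA k by simp
    show "map_poly of_int (pCons (n * a) (smult k A)) = smult (of_int (a * k)) (pCons c f)"
      using aA k c by (simp add: map_poly_pCons map_poly_smult mult.commute)
  qed
qed

lemma map_poly_of_int_mult:
  "(map_poly of_int (A * B) :: 'a::comm_ring_1 poly) = map_poly of_int A * map_poly of_int B"
  by (simp add: poly_eq_iff coeff_map_poly coeff_mult)

lemma lead_coeff_map_poly_of_int:
  "lead_coeff (map_poly of_int A :: 'a::{comm_ring_1,ring_char_0} poly) = of_int (lead_coeff A)"
  by (simp add: degree_map_poly coeff_map_poly)

lemma content_int_poly_nonneg: "Polynomial.content (p :: int poly) \<ge> 0"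
  by (metis normalize_content normalize_int_def abs_ge_zero)

lemma content_le_lead_coeff:
  fixes p :: "int poly"
  assumes "lead_coeff p > 0"
  shows "Polynomial.content p \<le> lead_coeff p"
  using zdvd_imp_le[OF content_dvd_coeff assms] .

text \<open>Clearing denominators, \<open>a f\<close> and \<open>b g\<close> become integer polynomials whose
  contents are at most their leading coefficients \<open>a\<close>, \<open>b\<close>, while the product of the contents
  is \<open>a b\<close>; so the content of \<open>a f\<close> is exactly \<open>a\<close>.\<close>

lemma monic_factor_of_monic_int_poly_coeff_Ints:
  fixes f g :: "rat poly" and P :: "int poly"
  assumes fg: "f * g = map_poly of_int P" and f_monic: "lead_coeff f = 1" and P_monic: "lead_coeff P = 1"
  shows "coeff f i \<in> \<int>"
proof -
  have g_monic: "lead_coeff g = 1"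
    using arg_cong[OF fg, of lead_coeff] f_monic P_monic
    by (simp add: lead_coeff_mult lead_coeff_map_poly_of_int)
  obtain a A where a: "a > 0" and A: "map_poly of_int A = smult (of_int a) f"
    by (rule rat_poly_common_denominator)
  obtain b B where b: "b > 0" and B: "map_poly of_int B = smult (of_int b) g"
    by (rule rat_poly_common_denominator)
  have "(map_poly of_int (A * B) :: rat poly) = map_poly of_int (smult (a * b) P)"
    by (simp add: map_poly_of_int_mult A B map_poly_smult fg[symmetric] mult_ac)
  hence "A * B = smult (a * b) P"
    by (simp add: poly_eq_iff coeff_map_poly flip: of_int_mult)
  moreover have "Polynomial.content P = 1"
    using content_dvd_coeff[of P "degree P"] P_monic content_int_poly_nonneg[of P]
    by simp
  ultimately have contents: "Polynomial.content A * Polynomial.content B = a * b"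
    using a b by (simp add: content_mult[symmetric])
  have lead_A: "lead_coeff A = a" and lead_B: "lead_coeff B = b"
    using arg_cong[OF A, of lead_coeff] arg_cong[OF B, of lead_coeff] f_monic g_monic a b
    by (simp_all add: lead_coeff_map_poly_of_int)
  have "Polynomial.content A \<le> a" "Polynomial.content B \<le> b"
    using content_le_lead_coeff[of A] content_le_lead_coeff[of B] lead_A lead_B a b by simp_all
  hence "Polynomial.content A = a"
    using contents content_int_poly_nonneg[of A] content_int_poly_nonneg[of B] a b
    by (smt (verit) mult_left_mono mult_strict_right_mono)
  then obtain k where k: "coeff A i = a * k"
    using content_dvd_coeff[of A i] by (metis dvdE)
  have "rat_of_int (coeff A i) = of_int a * coeff f i"
    using arg_cong[OF A, of "\<lambda>p. coeff p i"] by (simp add: coeff_map_poly)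
  hence "coeff f i = of_int k" using k a by simp
  thus ?thesis by simp
qed

lemma map_poly_of_rat_add:
  "(map_poly of_rat (A + B) :: 'a::field_char_0 poly) = map_poly of_rat A + map_poly of_rat B"
  by (simp add: poly_eq_iff coeff_map_poly of_rat_add)

lemma map_poly_of_rat_mult:
  "(map_poly of_rat (A * B) :: 'a::field_char_0 poly) = map_poly of_rat A * map_poly of_rat B"
  by (simp add: poly_eq_iff coeff_map_poly coeff_mult of_rat_sum of_rat_mult)

section \<open>The field \<open>\<rat>(\<surd>D)\<close> and its conjugation\<close>

lemma alg_int_iff_algebraic_int: "alg_int x \<longleftrightarrow> algebraic_int x"
  unfolding alg_int_def algebraic_int_altdef_ipoly by (simp add: conj_commute)

lemma algebraic_int_root_monic_int_quadratic:
  fixes x :: "'a :: field_char_0"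
  assumes "b \<in> \<int>" "c \<in> \<int>" "x\<^sup>2 + b * x + c = 0"
  shows "algebraic_int x"
proof -
  from assms(1,2) obtain b' c' where "b = of_int b'" "c = of_int c'" by (auto elim!: Ints_cases)
  with assms(3) show ?thesis
    unfolding algebraic_int_altdef_ipoly
    by (intro exI[of _ "[:c', b', 1:]"]) (simp add: map_poly_pCons algebra_simps power2_eq_square)
qed

lemma abs_mod_le_abs:
  fixes a b :: int
  assumes "b \<noteq> 0"
  shows "\<bar>a mod b\<bar> \<le> \<bar>b\<bar>"
proof (cases "b > 0")
  case True
  thus ?thesis using pos_mod_bound[of b a] pos_mod_sign[of b a] by linarith
next
  case False
  thus ?thesis using assms neg_mod_bound[of b a] neg_mod_sign[of b a] by linarith
qed

lemma sqrt_nat_irrational: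
  assumes not_square: "\<And>n. n\<^sup>2 \<noteq> D"
  shows "sqrt (real D) \<notin> \<rat>"
proof
  assume rat: "sqrt (real D) \<in> \<rat>"
  have "algebraic_int (sqrt (real D))"
    by (intro algebraic_int_sqrt int_imp_algebraic_int) simp
  with rat have "sqrt (real D) \<in> \<int>"
    by (rule rational_algebraic_int_is_int[rotated])
  then obtain k where k: "sqrt (real D) = of_int k"
    by (auto elim: Ints_cases)
  hence "real (nat k ^ 2) = real D"
    by (metis of_int_0_le_iff of_nat_nat of_nat_power real_sqrt_ge_zero real_sqrt_pow2 of_nat_0_le_iff)
  thus False using not_square of_nat_eq_iff by blast
qed

lemma squarefree_not_square:
  fixes D :: nat
  assumes "squarefree D" "D \<ge> 2"
  shows "n\<^sup>2 \<noteq> D"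
proof
  assume "n\<^sup>2 = D"
  hence "n dvd 1" using assms(1) unfolding squarefree_def by auto
  thus False using \<open>n\<^sup>2 = D\<close> assms(2) by simp
qed

definition qtrace :: "nat \<Rightarrow> real \<Rightarrow> real" where
  "qtrace D x = x + qconj D x"

locale real_quadratic_field =
  fixes D :: nat
  assumes sqrt_irrational: "sqrt (real D) \<notin> \<rat>"
begin

abbreviation sqrtD :: real where "sqrtD \<equiv> sqrt (real D)"

lemma D_ge_2: "D \<ge> 2"
proof (rule ccontr)
  assume "\<not> D \<ge> 2"
  hence "D = 0 \<or> D = 1" by auto
  thus False using sqrt_irrational by auto
qed

lemma sqrtD_gt_1: "sqrtD > 1"
  using D_ge_2 by simp

lemma qfield_coords_unique:
  assumes "p \<in> \<rat>" "q \<in> \<rat>" "p' \<in> \<rat>" "q' \<in> \<rat>" "p + q * sqrtD = p' + q' * sqrtD"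
  shows "p = p' \<and> q = q'"
proof (cases "q = q'")
  case False
  hence "sqrtD = (p' - p) / (q - q')" using assms(5) by (simp add: field_simps)
  also have "\<dots> \<in> \<rat>" using assms by simp
  finally show ?thesis using sqrt_irrational by simp
qed (use assms in simp)

lemma qfield_cases:
  assumes "x \<in> qfield D"
  obtains p q where "p \<in> \<rat>" "q \<in> \<rat>" "x = p + q * sqrtD"
  using assms unfolding qfield_def by blast

lemma qfieldI: "p \<in> \<rat> \<Longrightarrow> q \<in> \<rat> \<Longrightarrow> p + q * sqrtD \<in> qfield D"
  unfolding qfield_def by blast

lemma qconj_coords:
  assumes "p \<in> \<rat>" "q \<in> \<rat>"
  shows "qconj D (p + q * sqrtD) = p - q * sqrtD"
  unfolding qconj_def
proof (rule the_equality)
  fix y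
  assume "\<exists>p' q'. p' \<in> \<rat> \<and> q' \<in> \<rat> \<and> p + q * sqrtD = p' + q' * sqrtD \<and> y = p' - q' * sqrtD"
  with qfield_coords_unique[OF assms] show "y = p - q * sqrtD" by auto
qed (use assms in blast)

lemma qnorm_coords:
  assumes "p \<in> \<rat>" "q \<in> \<rat>"
  shows "qnorm D (p + q * sqrtD) = p\<^sup>2 - real D * q\<^sup>2"
  unfolding qnorm_def qconj_coords[OF assms]
  by (simp add: algebra_simps power2_eq_square)

lemma qtrace_coords:
  assumes "p \<in> \<rat>" "q \<in> \<rat>"
  shows "qtrace D (p + q * sqrtD) = 2 * p"
  unfolding qtrace_def qconj_coords[OF assms] by simp

lemma qfield_of_rat [simp]: "x \<in> \<rat> \<Longrightarrow> x \<in> qfield D"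
  using qfieldI[of x 0] by simp

lemma qconj_of_rat [simp]: "x \<in> \<rat> \<Longrightarrow> qconj D x = x"
  using qconj_coords[of x 0] by simp

lemma qfield_add: "x \<in> qfield D \<Longrightarrow> y \<in> qfield D \<Longrightarrow> x + y \<in> qfield D"
  and qconj_add: "x \<in> qfield D \<Longrightarrow> y \<in> qfield D \<Longrightarrow> qconj D (x + y) = qconj D x + qconj D y"
proof -
  assume "x \<in> qfield D" "y \<in> qfield D"
  then obtain p q p' q' where pq: "p \<in> \<rat>" "q \<in> \<rat>" "p' \<in> \<rat>" "q' \<in> \<rat>"
    and xy: "x = p + q * sqrtD" "y = p' + q' * sqrtD"
    by (metis qfield_cases)
  have sum: "x + y = (p + p') + (q + q') * sqrtD"
    unfolding xy by (simp add: algebra_simps)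
  show "x + y \<in> qfield D" unfolding sum using pq by (intro qfieldI) simp_all
  have "qconj D (x + y) = (p + p') - (q + q') * sqrtD"
    unfolding sum using pq by (intro qconj_coords) simp_all
  thus "qconj D (x + y) = qconj D x + qconj D y"
    unfolding xy qconj_coords[OF pq(1,2)] qconj_coords[OF pq(3,4)] by (simp add: algebra_simps)
qed

lemma qfield_mult: "x \<in> qfield D \<Longrightarrow> y \<in> qfield D \<Longrightarrow> x * y \<in> qfield D"
  and qconj_mult: "x \<in> qfield D \<Longrightarrow> y \<in> qfield D \<Longrightarrow> qconj D (x * y) = qconj D x * qconj D y"
proof -
  assume "x \<in> qfield D" "y \<in> qfield D"
  then obtain p q p' q' where pq: "p \<in> \<rat>" "q \<in> \<rat>" "p' \<in> \<rat>" "q' \<in> \<rat>"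
    and xy: "x = p + q * sqrtD" "y = p' + q' * sqrtD"
    by (metis qfield_cases)
  have prod: "x * y = (p * p' + real D * q * q') + (p * q' + q * p') * sqrtD"
    unfolding xy by (simp add: algebra_simps)
  show "x * y \<in> qfield D" unfolding prod using pq by (intro qfieldI) simp_all
  have "qconj D (x * y) = (p * p' + real D * q * q') - (p * q' + q * p') * sqrtD"
    unfolding prod using pq by (intro qconj_coords) simp_all
  thus "qconj D (x * y) = qconj D x * qconj D y"
    unfolding xy qconj_coords[OF pq(1,2)] qconj_coords[OF pq(3,4)] by (simp add: algebra_simps)
qed

lemma qfield_qconj: "x \<in> qfield D \<Longrightarrow> qconj D x \<in> qfield D"
  and qconj_qconj: "x \<in> qfield D \<Longrightarrow> qconj D (qconj D x) = x"
proof -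
  assume "x \<in> qfield D"
  then obtain p q where pq: "p \<in> \<rat>" "q \<in> \<rat>" and x: "x = p + q * sqrtD"
    by (rule qfield_cases)
  have conj: "qconj D x = p + (- q) * sqrtD"
    unfolding x qconj_coords[OF pq] by simp
  show "qconj D x \<in> qfield D" unfolding conj using pq by (intro qfieldI) simp_all
  have "qconj D (qconj D x) = p - (- q) * sqrtD"
    unfolding conj using pq by (intro qconj_coords) simp_all
  thus "qconj D (qconj D x) = x" unfolding x by simp
qed

lemma qtrace_Rats: "x \<in> qfield D \<Longrightarrow> qtrace D x \<in> \<rat>"
  by (metis qfield_cases qtrace_coords Rats_mult Rats_number_of)

lemma qnorm_Rats: "x \<in> qfield D \<Longrightarrow> qnorm D x \<in> \<rat>"
  by (erule qfield_cases) (simp add: qnorm_coords)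

lemma qnorm_mult: "x \<in> qfield D \<Longrightarrow> y \<in> qfield D \<Longrightarrow> qnorm D (x * y) = qnorm D x * qnorm D y"
  by (simp add: qnorm_def qconj_mult)

lemma qfield_power: "x \<in> qfield D \<Longrightarrow> x ^ n \<in> qfield D"
  by (induction n) (auto intro: qfield_mult)

lemma qnorm_power: "x \<in> qfield D \<Longrightarrow> qnorm D (x ^ n) = qnorm D x ^ n"
  by (induction n) (simp add: qnorm_def, simp add: qnorm_mult qfield_power)

lemma qnorm_diff_one:
  assumes "x \<in> qfield D"
  shows "qnorm D (x - 1) = qnorm D x - qtrace D x + 1"
proof -
  have conj: "qconj D (x - 1) = qconj D x - 1"
    using qconj_add[OF assms, of "-1"] by simp
  show ?thesis unfolding qnorm_def qtrace_def conj by (simp add: algebra_simps)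
qed

lemma qconj_eq_inverse: "qnorm D x = 1 \<Longrightarrow> qconj D x = inverse x"
  unfolding qnorm_def by (metis inverse_unique)

section \<open>The ring of integers\<close>

text \<open>An irrational algebraic integer \<open>x\<close> of the field is a root of the rational polynomial
  \<open>X\<^sup>2 - qtrace D x X + qnorm D x\<close>, which divides its monic integer polynomial (the remainder
  is a rational linear polynomial vanishing at \<open>x\<close>); Gauss' lemma then makes the coefficients
  integers.\<close>

lemma algebraic_int_qfield_trace_norm:
  assumes x: "x \<in> qfield D" and int: "algebraic_int x"
  shows "qtrace D x \<in> \<int> \<and> qnorm D x \<in> \<int>"
proof (cases "x \<in> \<rat>")
  case True
  hence "x \<in> \<int>" using int rational_algebraic_int_is_int by blast
  thus ?thesis using True by (simp add: qtrace_def qnorm_def)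
next
  case False
  obtain t n where t: "qtrace D x = of_rat t" and n: "qnorm D x = of_rat n"
    using qtrace_Rats[OF x] qnorm_Rats[OF x] by (auto elim!: Rats_cases)
  from int obtain P where P: "poly (map_poly of_int P) x = 0" "lead_coeff P = 1"
    unfolding algebraic_int_altdef_ipoly by blast
  define m :: "rat poly" where "m = [:n, - t, 1:]"
  define E :: "rat poly \<Rightarrow> real" where "E f = poly (map_poly of_rat f) x" for f
  have E_P: "E (map_poly of_int P) = 0"
    using P(1) by (simp add: E_def map_poly_map_poly o_def)
  have E_m: "E m = 0"
    using t[unfolded qtrace_def, symmetric] n[unfolded qnorm_def, symmetric]
    by (simp add: E_def m_def map_poly_pCons of_rat_minus algebra_simps power2_eq_square)
  define r where "r = map_poly of_int P mod m"
  have "degree r < 2"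
    using degree_mod_less[of m "map_poly of_int P"] by (auto simp: r_def m_def numeral_2_eq_2)
  hence r_eq: "r = [:coeff r 0, coeff r 1:]"
    by (auto simp: poly_eq_iff coeff_pCons split: nat.splits intro!: coeff_eq_0)
  have "E (map_poly of_int P) = E (m * (map_poly of_int P div m) + r)"
    by (simp add: r_def)
  also have "\<dots> = E m * E (map_poly of_int P div m) + E r"
    by (simp add: E_def map_poly_of_rat_add map_poly_of_rat_mult)
  finally have lin: "of_rat (coeff r 0) + of_rat (coeff r 1) * x = 0"
    using E_P E_m by (subst (asm) r_eq) (simp add: E_def map_poly_pCons mult.commute)
  have "coeff r 1 = 0"
  proof (rule ccontr)
    assume "coeff r 1 \<noteq> 0"
    hence "x = - of_rat (coeff r 0) / of_rat (coeff r 1)"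
      using lin by (simp add: field_simps add_eq_0_iff)
    thus False using False by simp
  qed
  with lin have "r = 0"
    by (subst r_eq) simp
  hence "m * (map_poly of_int P div m) = map_poly of_int P"
    by (simp add: r_def mod_eq_0_iff_dvd)
  hence "coeff m i \<in> \<int>" for i
    using P(2) by (intro monic_factor_of_monic_int_poly_coeff_Ints) (simp_all add: m_def)
  from this[of 0] this[of 1] have "n \<in> \<int>" "- t \<in> \<int>"
    by (simp_all add: m_def)
  hence "n \<in> \<int>" "t \<in> \<int>"
    using Ints_minus[of "- t"] by simp_all
  thus ?thesis
    unfolding t n by (metis Ints_cases of_rat_of_int_eq Ints_of_int)
qed

lemma ring_of_ints_iff:
  "x \<in> ring_of_ints D \<longleftrightarrow> x \<in> qfield D \<and> qtrace D x \<in> \<int> \<and> qnorm D x \<in> \<int>"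
proof
  assume "x \<in> ring_of_ints D"
  thus "x \<in> qfield D \<and> qtrace D x \<in> \<int> \<and> qnorm D x \<in> \<int>"
    using algebraic_int_qfield_trace_norm
    unfolding ring_of_ints_def alg_int_iff_algebraic_int by blast
next
  assume x: "x \<in> qfield D \<and> qtrace D x \<in> \<int> \<and> qnorm D x \<in> \<int>"
  have "x\<^sup>2 + (- qtrace D x) * x + qnorm D x = 0"
    by (simp add: qtrace_def qnorm_def algebra_simps power2_eq_square)
  hence "algebraic_int x"
    using x by (intro algebraic_int_root_monic_int_quadratic[of "- qtrace D x" "qnorm D x"]) auto
  thus "x \<in> ring_of_ints D"
    using x unfolding ring_of_ints_def alg_int_iff_algebraic_int by blast
qed

lemma ring_of_ints_qfield: "x \<in> ring_of_ints D \<Longrightarrow> x \<in> qfield D"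
  and qtrace_Ints: "x \<in> ring_of_ints D \<Longrightarrow> qtrace D x \<in> \<int>"
  and qnorm_Ints: "x \<in> ring_of_ints D \<Longrightarrow> qnorm D x \<in> \<int>"
  by (simp_all add: ring_of_ints_iff)

lemma ring_of_ints_of_int [simp]: "of_int k \<in> ring_of_ints D"
  by (simp add: ring_of_ints_iff qtrace_def qnorm_def)

lemma ring_of_ints_0 [simp]: "0 \<in> ring_of_ints D"
  using ring_of_ints_of_int[of 0] by simp

lemma ring_of_ints_1 [simp]: "1 \<in> ring_of_ints D"
  using ring_of_ints_of_int[of 1] by simp

lemma ring_of_ints_qconj: "x \<in> ring_of_ints D \<Longrightarrow> qconj D x \<in> ring_of_ints D"
  by (simp add: ring_of_ints_iff qfield_qconj qtrace_def qnorm_def qconj_qconj algebra_simps)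

text \<open>Writing \<open>x'\<close> for the conjugate, \<open>T = x y' + x' y\<close> is rational, and \<open>T\<close> and \<open>T' = x y + x' y'\<close>
  have integral sum and product; so \<open>T\<close> is a rational algebraic integer.\<close>

lemma qtrace_mult_qconj_Ints:
  assumes x: "x \<in> ring_of_ints D" and y: "y \<in> ring_of_ints D"
  shows "qtrace D (x * qconj D y) \<in> \<int>"
proof -
  have xq: "x \<in> qfield D" and yq: "y \<in> qfield D"
    using x y by (simp_all add: ring_of_ints_qfield)
  define T where "T = qtrace D (x * qconj D y)"
  define T' where "T' = x * y + qconj D x * qconj D y"
  have T: "T = x * qconj D y + qconj D x * y"
    unfolding T_def qtrace_def using xq yq by (simp add: qconj_mult qfield_qconj qconj_qconj)
  have sum: "T + T' = qtrace D x * qtrace D y"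
    unfolding T T'_def qtrace_def by (simp add: algebra_simps)
  have prod: "T * T' = qnorm D y * (qtrace D x ^ 2 - 2 * qnorm D x)
                       + qnorm D x * (qtrace D y ^ 2 - 2 * qnorm D y)"
    unfolding T T'_def qtrace_def qnorm_def by (simp add: algebra_simps power2_eq_square)
  have "algebraic_int T"
  proof (rule algebraic_int_root_monic_int_quadratic[of "- (T + T')" "T * T'"])
    show "- (T + T') \<in> \<int>" "T * T' \<in> \<int>"
      unfolding sum prod using x y by (simp_all add: qtrace_Ints qnorm_Ints)
    show "T\<^sup>2 + - (T + T') * T + T * T' = 0"
      by (simp add: algebra_simps power2_eq_square)
  qed
  moreover have "T \<in> \<rat>"
    unfolding T_def using xq yq by (intro qtrace_Rats qfield_mult qfield_qconj)
  ultimately show ?thesis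
    unfolding T_def by (rule rational_algebraic_int_is_int)
qed

lemma ring_of_ints_add:
  assumes x: "x \<in> ring_of_ints D" and y: "y \<in> ring_of_ints D"
  shows "x + y \<in> ring_of_ints D"
proof -
  have xq: "x \<in> qfield D" and yq: "y \<in> qfield D"
    using x y by (simp_all add: ring_of_ints_qfield)
  have "qtrace D (x + y) = qtrace D x + qtrace D y"
    using xq yq by (simp add: qtrace_def qconj_add)
  moreover have "qnorm D (x + y) = qnorm D x + qnorm D y + qtrace D (x * qconj D y)"
    using xq yq by (simp add: qnorm_def qtrace_def qconj_add qconj_mult qfield_qconj qconj_qconj
                              algebra_simps)
  ultimately show ?thesis
    using x y qtrace_mult_qconj_Ints[OF x y]
    by (simp add: ring_of_ints_iff qfield_add)
qed

lemma ring_of_ints_mult: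
  assumes x: "x \<in> ring_of_ints D" and y: "y \<in> ring_of_ints D"
  shows "x * y \<in> ring_of_ints D"
proof -
  have xq: "x \<in> qfield D" and yq: "y \<in> qfield D"
    using x y by (simp_all add: ring_of_ints_qfield)
  have "qtrace D (x * y) = qtrace D x * qtrace D y - qtrace D (x * qconj D y)"
    using xq yq by (simp add: qtrace_def qconj_mult qfield_qconj qconj_qconj algebra_simps)
  thus ?thesis
    using x y qtrace_mult_qconj_Ints[OF x y]
    by (simp add: ring_of_ints_iff qfield_mult qnorm_mult)
qed

lemma ring_of_ints_uminus: "x \<in> ring_of_ints D \<Longrightarrow> - x \<in> ring_of_ints D"
  using ring_of_ints_mult[of "-1" x] ring_of_ints_of_int[of "-1"] by simp

lemma ring_of_ints_diff: "x \<in> ring_of_ints D \<Longrightarrow> y \<in> ring_of_ints D \<Longrightarrow> x - y \<in> ring_of_ints D"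
  using ring_of_ints_add[of x "- y"] ring_of_ints_uminus[of y] by simp

lemma ring_of_ints_power: "x \<in> ring_of_ints D \<Longrightarrow> x ^ n \<in> ring_of_ints D"
  by (induction n) (simp_all add: ring_of_ints_mult)

lemma qnorm_of_int: "qnorm D (of_int k) = of_int k ^ 2"
  by (simp add: qnorm_def power2_eq_square)

lemma qunits_iff: "x \<in> qunits D \<longleftrightarrow> x \<in> ring_of_ints D \<and> \<bar>qnorm D x\<bar> = 1"
proof
  assume "x \<in> qunits D"
  hence x: "x \<in> ring_of_ints D" "x \<noteq> 0" and x': "inverse x \<in> ring_of_ints D"
    unfolding qunits_def by auto
  have "qnorm D x * qnorm D (inverse x) = 1"
    using qnorm_mult[OF ring_of_ints_qfield[OF x(1)] ring_of_ints_qfield[OF x']] x(2)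
    by (simp add: qnorm_def)
  moreover obtain a b where "qnorm D x = of_int a" "qnorm D (inverse x) = of_int b"
    using qnorm_Ints[OF x(1)] qnorm_Ints[OF x'] by (auto elim!: Ints_cases)
  ultimately have "a * b = 1" "qnorm D x = of_int a"
    by (simp_all flip: of_int_mult)
  thus "x \<in> ring_of_ints D \<and> \<bar>qnorm D x\<bar> = 1"
    using x zmult_eq_1_iff[of a b] by auto
next
  assume x: "x \<in> ring_of_ints D \<and> \<bar>qnorm D x\<bar> = 1"
  have "x * (qnorm D x * qconj D x) = (qnorm D x)\<^sup>2"
    by (simp add: qnorm_def power2_eq_square algebra_simps)
  also have "\<dots> = 1"
    using x by (metis power2_abs power_one)
  finally have inv: "inverse x = qnorm D x * qconj D x" and "x \<noteq> 0"
    by (auto intro: inverse_unique)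
  have "qnorm D x * qconj D x \<in> ring_of_ints D"
    using x ring_of_ints_qconj qnorm_Ints by (metis Ints_cases ring_of_ints_mult ring_of_ints_of_int)
  thus "x \<in> qunits D"
    using x \<open>x \<noteq> 0\<close> by (simp add: qunits_def inv)
qed

section \<open>Pell's equation and the fundamental unit\<close>

lemma pell_norm_nonzero:
  fixes h k :: int
  assumes "k \<noteq> 0"
  shows "h\<^sup>2 - int D * k\<^sup>2 \<noteq> 0"
proof
  assume "h\<^sup>2 - int D * k\<^sup>2 = 0"
  hence "(of_int \<bar>h\<bar> / of_int \<bar>k\<bar>)\<^sup>2 = real D"
    using assms by (simp add: field_simps flip: of_int_power)
  hence "sqrtD = of_int \<bar>h\<bar> / of_int \<bar>k\<bar>"
    by (metis abs_ge_zero divide_nonneg_nonneg of_int_0_le_iff real_sqrt_unique)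
  thus False using sqrt_irrational by simp
qed

lemma approx_set_pell_norm_bound:
  assumes "(h, k) \<in> approx_set sqrtD"
  shows "\<bar>h\<^sup>2 - int D * k\<^sup>2\<bar> \<le> \<lceil>1 + 2 * sqrtD\<rceil>"
proof -
  have k: "k > 0" and approx: "\<bar>sqrtD - of_int h / of_int k\<bar> < 1 / (of_int k)\<^sup>2"
    using assms unfolding approx_set_def by auto
  have "\<bar>of_int h - of_int k * sqrtD\<bar> = of_int k * \<bar>sqrtD - of_int h / of_int k\<bar>"
    using k by (simp add: abs_mult[symmetric] field_simps)
  also have "\<dots> < of_int k * (1 / (of_int k)\<^sup>2)"
    using k approx by (intro mult_strict_left_mono) simp_all
  also have "\<dots> = 1 / of_int k"
    using k by (simp add: power2_eq_square)
  finally have close: "\<bar>of_int h - of_int k * sqrtD\<bar> < 1 / of_int k" .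
  have "1 / real_of_int k \<le> 1" "0 < of_int k * sqrtD"
    using k sqrtD_gt_1 by simp_all
  hence sum_bound: "\<bar>of_int h + of_int k * sqrtD\<bar> \<le> 1 + 2 * of_int k * sqrtD"
    using close unfolding abs_le_iff abs_less_iff by linarith
  have "real_of_int \<bar>h\<^sup>2 - int D * k\<^sup>2\<bar>
          = \<bar>of_int h - of_int k * sqrtD\<bar> * \<bar>of_int h + of_int k * sqrtD\<bar>"
    by (simp add: abs_mult[symmetric] algebra_simps power2_eq_square)
  also have "\<dots> \<le> (1 / of_int k) * (1 + 2 * of_int k * sqrtD)"
    using close sum_bound k by (intro mult_mono) auto
  also have "\<dots> \<le> 1 + 2 * sqrtD"
    using k by (simp add: field_simps)
  finally show ?thesis by linarith
qed

text \<open>Two distinct approximations \<open>h\<^sub>i/k\<^sub>i\<close> of \<open>\<surd>D\<close> with the same value \<open>N\<close> of \<open>h\<^sup>2 - D k\<^sup>2\<close> and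
  congruent modulo \<open>N\<close> give the solution \<open>(h\<^sub>1 + k\<^sub>1\<surd>D)(h\<^sub>2 - k\<^sub>2\<surd>D)/N\<close> of Pell's equation.\<close>

lemma pell_solution_of_congruent_approximations:
  fixes h1 k1 h2 k2 N :: int
  assumes k: "k1 > 0" "k2 > 0" "coprime h1 k1" "coprime h2 k2" "(h1, k1) \<noteq> (h2, k2)"
    and N: "h1\<^sup>2 - int D * k1\<^sup>2 = N" "h2\<^sup>2 - int D * k2\<^sup>2 = N" "N \<noteq> 0"
    and cong: "h1 mod N = h2 mod N" "k1 mod N = k2 mod N"
  shows "\<exists>X Y. Y \<noteq> 0 \<and> X\<^sup>2 - int D * Y\<^sup>2 = 1"
proof -
  have "N dvd h2 - h1" "N dvd k2 - k1"
    using cong by (simp_all add: mod_eq_dvd_iff dvd_diff_commute)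
  then obtain a b where "h2 - h1 = N * a" "k2 - k1 = N * b"
    by (elim dvdE)
  hence a: "h2 = h1 + N * a" and b: "k2 = k1 + N * b"
    by (simp_all add: algebra_simps)
  define X where "X = 1 + a * h1 - int D * b * k1"
  define Y where "Y = a * k1 - b * h1"
  have NX: "N * X = h1 * h2 - int D * k1 * k2"
    unfolding X_def a b N(1)[symmetric] by (simp add: algebra_simps power2_eq_square)
  have NY: "N * Y = h2 * k1 - h1 * k2"
    unfolding Y_def a b by (simp add: algebra_simps)
  have "N\<^sup>2 * (X\<^sup>2 - int D * Y\<^sup>2) = (N * X)\<^sup>2 - int D * (N * Y)\<^sup>2"
    by (simp add: algebra_simps power2_eq_square)
  also have "\<dots> = (h1\<^sup>2 - int D * k1\<^sup>2) * (h2\<^sup>2 - int D * k2\<^sup>2)"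
    unfolding NX NY by (simp add: algebra_simps power2_eq_square)
  also have "\<dots> = N\<^sup>2 * 1"
    using N by (simp add: power2_eq_square)
  finally have XY: "X\<^sup>2 - int D * Y\<^sup>2 = 1"
    using N(3) by (simp only: mult_cancel_left power_eq_0_iff) simp
  have "Y \<noteq> 0"
  proof
    assume "Y = 0"
    hence eq: "h2 * k1 = h1 * k2" using NY by simp
    have "k1 dvd h1 * k2" "k2 dvd h2 * k1"
      using dvd_triv_right[of k1 h2] dvd_triv_right[of k2 h1] eq by simp_all
    hence "k1 dvd k2" "k2 dvd k1"
      using k(3,4) by (simp_all add: coprime_commute coprime_dvd_mult_right_iff)
    hence "k1 = k2" using k(1,2) by (simp add: zdvd_antisym_nonneg)
    thus False using eq k(1,5) by simp
  qed
  thus ?thesis using XY by blast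
qed

lemma pell_solvable: "\<exists>X Y :: int. Y \<noteq> 0 \<and> X\<^sup>2 - int D * Y\<^sup>2 = 1"
proof -
  define M where "M = \<lceil>1 + 2 * sqrtD\<rceil>"
  define pell_norm where "pell_norm = (\<lambda>(h, k :: int). h\<^sup>2 - int D * k\<^sup>2)"
  define f where "f = (\<lambda>(h, k). (pell_norm (h, k), h mod pell_norm (h, k), k mod pell_norm (h, k)))"
  have nonzero: "pell_norm hk \<noteq> 0" if "hk \<in> approx_set sqrtD" for hk
    using that pell_norm_nonzero by (auto simp: approx_set_def pell_norm_def)
  have "f ` approx_set sqrtD \<subseteq> {-M..M} \<times> {-M..M} \<times> {-M..M}"
  proof
    fix y assume "y \<in> f ` approx_set sqrtD"
    then obtain h k where hk: "(h, k) \<in> approx_set sqrtD" and y: "y = f (h, k)" by auto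
    have "\<bar>pell_norm (h, k)\<bar> \<le> M"
      using approx_set_pell_norm_bound[OF hk] by (simp add: M_def pell_norm_def)
    thus "y \<in> {-M..M} \<times> {-M..M} \<times> {-M..M}"
      unfolding y
      using nonzero[OF hk] abs_mod_le_abs[of "pell_norm (h, k)" h] abs_mod_le_abs[of "pell_norm (h, k)" k]
      by (auto simp: f_def abs_le_iff)
  qed
  hence "finite (f ` approx_set sqrtD)"
    by (rule finite_subset) auto
  moreover have "infinite (approx_set sqrtD)"
    using rational_iff_finite_approx_set sqrt_irrational by blast
  ultimately have "\<not> inj_on f (approx_set sqrtD)"
    using finite_imageD by blast
  then obtain h1 k1 h2 k2 where hk: "(h1, k1) \<in> approx_set sqrtD" "(h2, k2) \<in> approx_set sqrtD"
      "(h1, k1) \<noteq> (h2, k2)" "f (h1, k1) = f (h2, k2)"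
    unfolding inj_on_def by auto
  hence "pell_norm (h2, k2) = pell_norm (h1, k1)"
    "h1 mod pell_norm (h1, k1) = h2 mod pell_norm (h1, k1)"
    "k1 mod pell_norm (h1, k1) = k2 mod pell_norm (h1, k1)"
    unfolding f_def by auto
  moreover have "k1 > 0" "k2 > 0" "coprime h1 k1" "coprime h2 k2"
    using hk(1,2) by (simp_all add: approx_set_def)
  ultimately show ?thesis
    using hk(3) nonzero[OF hk(1)] unfolding pell_norm_def
    by (intro pell_solution_of_congruent_approximations[of k1 k2 h1 h2 "h1\<^sup>2 - int D * k1\<^sup>2"]) simp_all
qed

lemma exists_unit_gt_1: "\<exists>u \<in> qunits D. u > 1"
proof -
  obtain X Y :: int where XY: "Y \<noteq> 0" "X\<^sup>2 - int D * Y\<^sup>2 = 1"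
    using pell_solvable by blast
  define u where "u = of_int \<bar>X\<bar> + of_int \<bar>Y\<bar> * sqrtD"
  have "qnorm D u = of_int (X\<^sup>2 - int D * Y\<^sup>2)"
    unfolding u_def by (subst qnorm_coords) simp_all
  moreover have "u \<in> qfield D"
    unfolding u_def by (intro qfieldI) simp_all
  moreover have "qtrace D u = of_int (2 * \<bar>X\<bar>)"
    unfolding u_def by (subst qtrace_coords) simp_all
  ultimately have "u \<in> qunits D"
    using XY(2) by (simp add: qunits_iff ring_of_ints_iff)
  have "1 \<le> real_of_int \<bar>Y\<bar>"
    using XY(1) by simp
  hence "sqrtD \<le> of_int \<bar>Y\<bar> * sqrtD"
    using sqrtD_gt_1 by simp
  moreover have "0 \<le> real_of_int \<bar>X\<bar>" by simp
  ultimately have "u > 1"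
    using sqrtD_gt_1 unfolding u_def by linarith
  with \<open>u \<in> qunits D\<close> show ?thesis by blast
qed

text \<open>A unit \<open>u > 1\<close> has conjugate of absolute value \<open>1/u < 1\<close>, so it is the larger root
  \<open>(t + \<surd>(t\<^sup>2 - 4n))/2\<close> of its characteristic polynomial, with trace \<open>0 < t \<le> B + 1\<close> and
  norm \<open>n = \<plusminus>1\<close>.\<close>

lemma finite_units_between: "finite {u \<in> qunits D. 1 < u \<and> u \<le> B}"
proof -
  define g where "g = (\<lambda>(t, n :: int). (of_int t + sqrt (of_int t ^ 2 - 4 * of_int n)) / 2)"
  have "{u \<in> qunits D. 1 < u \<and> u \<le> B} \<subseteq> g ` ({0..\<lceil>B\<rceil> + 1} \<times> {-1, 1})"
  proof
    fix u assume "u \<in> {u \<in> qunits D. 1 < u \<and> u \<le> B}"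
    hence u: "u \<in> ring_of_ints D" "\<bar>qnorm D u\<bar> = 1" "1 < u" "u \<le> B"
      by (auto simp: qunits_iff)
    obtain t where t: "u + qconj D u = of_int t"
      using qtrace_Ints[OF u(1)] by (auto simp: qtrace_def elim: Ints_cases)
    obtain n :: int where n: "u * qconj D u = of_int n" "n \<in> {-1, 1}"
    proof -
      have "qnorm D u = of_int 1 \<or> qnorm D u = of_int (-1)"
        using u(2) by auto
      thus thesis using that unfolding qnorm_def by blast
    qed
    have "\<bar>u\<bar> * \<bar>qconj D u\<bar> = 1"
      using n by (auto simp flip: abs_mult)
    have conj_small: "\<bar>qconj D u\<bar> < 1"
    proof (rule ccontr)
      assume "\<not> \<bar>qconj D u\<bar> < 1"
      hence "\<bar>u\<bar> * 1 \<le> \<bar>u\<bar> * \<bar>qconj D u\<bar>"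
        by (intro mult_left_mono) auto
      thus False using u(3) \<open>\<bar>u\<bar> * \<bar>qconj D u\<bar> = 1\<close> by linarith
    qed
    have "real_of_int 0 < of_int t" "real_of_int t < of_int (\<lceil>B\<rceil> + 1)"
      using conj_small u(3,4) le_of_int_ceiling[of B] unfolding t[symmetric] abs_less_iff
      by simp_all linarith
    hence t_range: "t \<in> {0..\<lceil>B\<rceil> + 1}"
      by (simp only: of_int_less_iff) simp
    have "(u - qconj D u)\<^sup>2 = of_int t ^ 2 - 4 * of_int n"
      unfolding t[symmetric] n(1)[symmetric] by (simp add: algebra_simps power2_eq_square)
    moreover have "0 < u - qconj D u"
      using conj_small u(3) by (simp add: abs_less_iff)
    ultimately have "sqrt (of_int t ^ 2 - 4 * of_int n) = u - qconj D u"
      by (metis real_sqrt_abs abs_of_pos)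
    hence "u = g (t, n)"
      unfolding g_def using t by simp
    thus "u \<in> g ` ({0..\<lceil>B\<rceil> + 1} \<times> {-1, 1})"
      using t_range n(2) by blast
  qed
  thus ?thesis by (rule finite_subset) simp
qed

lemma fund_unit_qunits: "fund_unit D \<in> qunits D" and fund_unit_gt_1: "fund_unit D > 1"
proof -
  obtain u0 where u0: "u0 \<in> qunits D" "u0 > 1"
    using exists_unit_gt_1 by blast
  define F where "F = {u \<in> qunits D. 1 < u \<and> u \<le> u0}"
  have F: "finite F" "u0 \<in> F"
    unfolding F_def using finite_units_between u0 by auto
  have "fund_unit D = Min F"
    unfolding fund_unit_def
  proof (rule Least_equality)
    show "Min F \<in> qunits D \<and> Min F > 1"
      using Min_in[OF F(1)] F(2) by (auto simp: F_def)
    fix y assume y: "y \<in> qunits D \<and> y > 1"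
    have "Min F \<le> u0" using F by simp
    thus "Min F \<le> y"
      using y F(1) by (cases "y \<le> u0") (auto simp: F_def)
  qed
  thus "fund_unit D \<in> qunits D" "fund_unit D > 1"
    using Min_in[OF F(1)] F(2) by (auto simp: F_def)
qed

lemma uD_ring_of_ints: "uD D \<in> ring_of_ints D"
  and qnorm_uD: "qnorm D (uD D) = 1"
  and uD_gt_1: "uD D > 1"
proof -
  have f: "fund_unit D \<in> ring_of_ints D" "\<bar>qnorm D (fund_unit D)\<bar> = 1"
    using fund_unit_qunits by (simp_all add: qunits_iff)
  have "qnorm D (uD D) = 1"
  proof (cases "qnorm D (fund_unit D) = -1")
    case True
    thus ?thesis
      by (simp add: uD_def qnorm_power ring_of_ints_qfield[OF f(1)])
  qed (use f(2) in \<open>auto simp: uD_def\<close>)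
  moreover have "uD D \<in> ring_of_ints D" "uD D > 1"
    using f(1) fund_unit_gt_1 by (simp_all add: uD_def ring_of_ints_power)
  ultimately show "uD D \<in> ring_of_ints D" "qnorm D (uD D) = 1" "uD D > 1"
    by simp_all
qed

lemma uD_qunits: "uD D \<in> qunits D"
  by (simp add: qunits_iff uD_ring_of_ints qnorm_uD)

end

section \<open>Multiplicative orders modulo rational integers\<close>

lemma dvd_eq_of_less_double:
  fixes n m :: nat
  assumes "n dvd m" "0 < m" "m < 2 * n"
  shows "n = m"
proof -
  obtain k where k: "m = n * k" using assms(1) by blast
  hence "0 < k" "k < 2" using assms(2,3) by auto
  thus ?thesis using k by simp
qed

lemma ord_mod_pos:
  assumes "n > 0" "cong_OK D m (x ^ n) 1"
  shows "ord_mod D m x > 0"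
    and cong_OK_power_ord_mod: "cong_OK D m (x ^ ord_mod D m x) 1"
  using LeastI[of "\<lambda>n. n > 0 \<and> cong_OK D m (x ^ n) 1" n] assms
  unfolding ord_mod_def by auto

context real_quadratic_field
begin

lemma cong_OKI: "x - y = of_int m * z \<Longrightarrow> z \<in> ring_of_ints D \<Longrightarrow> cong_OK D m x y"
  unfolding cong_OK_def by (cases "m = 0") simp_all

lemma cong_OK_mult_modulus:
  assumes "k \<noteq> 0" "cong_OK D (k * m) x y"
  shows "cong_OK D m x y"
proof (cases "m = 0")
  case False
  show ?thesis
  proof (rule cong_OKI)
    show "x - y = of_int m * (of_int k * ((x - y) / of_int (k * m)))"
      using assms(1) False by simp
    show "of_int k * ((x - y) / of_int (k * m)) \<in> ring_of_ints D"
      using assms(2) unfolding cong_OK_def by (intro ring_of_ints_mult) simp_all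
  qed
qed (simp add: cong_OK_def)

lemma cong_OK_power_diff:
  assumes x: "x \<in> qunits D" and "cong_OK D m (x ^ a) 1" "cong_OK D m (x ^ b) 1" "b \<le> a"
  shows "cong_OK D m (x ^ (a - b)) 1"
proof -
  have "x \<noteq> 0" "inverse x \<in> ring_of_ints D"
    using x by (simp_all add: qunits_def)
  have "x ^ a - x ^ b = (x ^ (a - b) - 1) * x ^ b"
    using \<open>b \<le> a\<close> by (simp add: algebra_simps flip: power_add)
  hence "(x ^ (a - b) - 1) / of_int m = ((x ^ a - 1) - (x ^ b - 1)) * inverse (x ^ b) / of_int m"
    using \<open>x \<noteq> 0\<close> by simp
  also have "\<dots> = ((x ^ a - 1) / of_int m - (x ^ b - 1) / of_int m) * inverse x ^ b"
    by (simp add: diff_divide_distrib power_inverse algebra_simps)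
  also have "\<dots> \<in> ring_of_ints D"
    using assms \<open>inverse x \<in> ring_of_ints D\<close> unfolding cong_OK_def
    by (intro ring_of_ints_mult ring_of_ints_diff ring_of_ints_power)
  finally show ?thesis unfolding cong_OK_def .
qed

lemma ord_mod_dvd:
  assumes "x \<in> qunits D" "n > 0" "cong_OK D m (x ^ n) 1"
  shows "ord_mod D m x dvd n"
  using assms(2,3)
proof (induction n rule: less_induct)
  case (less n)
  note ord = ord_mod_pos[OF less.prems] cong_OK_power_ord_mod[OF less.prems]
  have "ord_mod D m x \<le> n"
    using less.prems unfolding ord_mod_def by (simp add: Least_le)
  show ?case
  proof (cases "ord_mod D m x = n")
    case False
    hence "ord_mod D m x dvd n - ord_mod D m x"
      using \<open>ord_mod D m x \<le> n\<close> ord cong_OK_power_diff[OF assms(1) less.prems(2) ord(2)]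
      by (intro less.IH) auto
    thus ?thesis
      using \<open>ord_mod D m x \<le> n\<close> by (rule dvd_diffD[OF _ dvd_refl])
  qed simp
qed

section \<open>The order of \<open>u\<^sub>D\<close> modulo \<open>d\<^sub>r\<close> and \<open>2 d\<^sub>r\<close>\<close>

lemma qtrace_norm_one: "qnorm D x = 1 \<Longrightarrow> qtrace D x = x + inverse x"
  by (simp add: qtrace_def qconj_eq_inverse)

lemma cong_OK_one_square_double:
  assumes "cong_OK D d x 1" "even d"
  shows "cong_OK D (2 * d) (x\<^sup>2) 1"
proof -
  obtain e where e: "d = 2 * e" using assms(2) by blast
  define y where "y = (x - 1) / of_int d"
  have y: "y \<in> ring_of_ints D"
    using assms(1) unfolding cong_OK_def y_def .
  show ?thesis
  proof (cases "d = 0")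
    case False
    hence "x = 1 + of_int d * y" by (simp add: y_def)
    hence "x\<^sup>2 - 1 = of_int (2 * d) * (y + of_int e * y\<^sup>2)"
      unfolding e by (simp add: algebra_simps power2_eq_square)
    thus ?thesis
      by (rule cong_OKI) (simp add: y ring_of_ints_add ring_of_ints_mult ring_of_ints_power)
  qed (simp add: cong_OK_def)
qed

lemma one_add_add_inverse_nonzero:
  fixes v :: real
  assumes "v \<noteq> 0"
  shows "1 + v + inverse v \<noteq> 0"
proof -
  have "(1 + v + inverse v) * v = (v + 1/2)\<^sup>2 + 3/4"
    using assms by (simp add: field_simps power2_eq_square)
  also have "\<dots> > 0" by (simp add: add_nonneg_pos)
  finally show ?thesis by auto
qed

lemma cube_minus_one_eq:
  assumes "v \<noteq> 0" "real_of_int d = 1 + v + inverse v"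
  shows "v ^ 3 - 1 = of_int d * (v * (v - 1))"
  using assms by (simp add: field_simps power3_eq_cube)

lemma cong_OK_cube_one:
  assumes "v \<in> ring_of_ints D" "v \<noteq> 0" "real_of_int d = 1 + v + inverse v"
  shows "cong_OK D d (v ^ 3) 1"
  by (rule cong_OKI[OF cube_minus_one_eq[OF assms(2,3)]])
     (simp add: assms(1) ring_of_ints_mult ring_of_ints_diff)

text \<open>Otherwise \<open>(v - 1)/2\<close> would be integral, making \<open>N(v - 1) = 3 - d\<close> divisible by 4.\<close>

lemma not_cong_OK_cube_one_double:
  assumes v: "v \<in> ring_of_ints D" "qnorm D v = 1"
    and d: "real_of_int d = 1 + v + inverse v" "even d"
  shows "\<not> cong_OK D (2 * d) (v ^ 3) 1"
proof
  assume cong: "cong_OK D (2 * d) (v ^ 3) 1"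
  have "v \<noteq> 0" using v(2) by (auto simp: qnorm_def)
  have "d \<noteq> 0"
    using one_add_add_inverse_nonzero[OF \<open>v \<noteq> 0\<close>] d(1) by auto
  have unit: "v \<in> qunits D" using v by (simp add: qunits_iff)
  have integral: "inverse v * ((v ^ 3 - 1) / of_int (2 * d)) \<in> ring_of_ints D"
    using cong unit by (intro ring_of_ints_mult) (simp_all add: cong_OK_def qunits_def)
  have eq: "inverse v * ((v ^ 3 - 1) / of_int (2 * d)) = (v - 1) / 2"
    unfolding cube_minus_one_eq[OF \<open>v \<noteq> 0\<close> d(1)] using \<open>v \<noteq> 0\<close> \<open>d \<noteq> 0\<close>
    by (simp add: field_simps)
  have half: "(v - 1) / 2 \<in> ring_of_ints D"
    using integral unfolding eq .
  have "qnorm D (v - 1) = qnorm D (of_int 2 * ((v - 1) / 2))"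
    by (rule arg_cong[where f = "qnorm D"]) simp
  also have "\<dots> = qnorm D (of_int 2) * qnorm D ((v - 1) / 2)"
    by (rule qnorm_mult) (simp_all add: ring_of_ints_qfield[OF half])
  also have "\<dots> = 4 * qnorm D ((v - 1) / 2)"
    using qnorm_of_int[of 2] by simp
  finally obtain k where k: "qnorm D (v - 1) = of_int (4 * k)"
    using qnorm_Ints[OF half] by (auto elim!: Ints_cases)
  have "qnorm D (v - 1) = of_int (3 - d)"
    using qnorm_diff_one[OF ring_of_ints_qfield[OF v(1)]] v(2) qtrace_norm_one[OF v(2)] d(1) by simp
  with k have "3 - d = 4 * k" by simp
  thus False using d(2) by presburger
qed

lemma qnorm_one_not_cong_OK_one:
  assumes w: "w \<in> ring_of_ints D" "qnorm D w = 1" "1 < w" and small: "w < (of_int m)\<^sup>2"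
  shows "\<not> cong_OK D m w 1"
proof
  assume "cong_OK D m w 1"
  hence z: "(w - 1) / of_int m \<in> ring_of_ints D" unfolding cong_OK_def .
  have "m \<noteq> 0" using small w(3) by auto
  have "qnorm D (w - 1) = (of_int m)\<^sup>2 * qnorm D ((w - 1) / of_int m)"
    using \<open>m \<noteq> 0\<close> qnorm_mult[OF _ ring_of_ints_qfield[OF z], of "of_int m"]
    by (simp add: qnorm_of_int)
  moreover have "qnorm D (w - 1) = 2 - (w + inverse w)"
    using qnorm_diff_one[OF ring_of_ints_qfield[OF w(1)]] w(2) qtrace_norm_one[OF w(2)] by simp
  moreover have "2 < w + inverse w"
  proof -
    have "0 < (w - 1)\<^sup>2 / w" using w(3) by simp
    also have "\<dots> = w + inverse w - 2"
      using w(3) by (simp add: field_simps power2_eq_square)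
    finally show ?thesis by simp
  qed
  moreover have "inverse w < 1" using w(3) by (simp add: inverse_less_1_iff)
  ultimately have "- (of_int m)\<^sup>2 < (of_int m)\<^sup>2 * qnorm D ((w - 1) / of_int m)"
                  "(of_int m)\<^sup>2 * qnorm D ((w - 1) / of_int m) < 0"
    using small by linarith+
  hence "-1 < qnorm D ((w - 1) / of_int m)" "qnorm D ((w - 1) / of_int m) < 0"
    using \<open>m \<noteq> 0\<close> by (simp_all add: mult_less_0_iff)
     (metis mult_minus1_right mult_less_cancel_left_pos zero_less_power2 of_int_0_eq_iff)
  thus False using qnorm_Ints[OF z] by (auto elim!: Ints_cases)
qed

lemma d_r_eq: "real_of_int (d_r D r) = 1 + uD D ^ r + inverse (uD D ^ r)"
proof -
  have "qnorm D (uD D ^ r) = 1"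
    by (simp add: qnorm_power qnorm_uD ring_of_ints_qfield[OF uD_ring_of_ints])
  hence "uD D ^ r + inverse (uD D ^ r) \<in> \<int>"
    using qtrace_Ints[OF ring_of_ints_power[OF uD_ring_of_ints]] qtrace_norm_one by metis
  then obtain k where "uD D ^ r + inverse (uD D ^ r) = of_int k"
    by (auto elim: Ints_cases)
  thus ?thesis
    by (simp add: d_r_def power_inverse add.assoc)
qed

lemma uD_power_lt_d_r: "uD D ^ r < real_of_int (d_r D r)"
  using uD_gt_1 by (simp add: d_r_eq add_pos_pos)

lemma d_r_pos: "d_r D r > 0"
proof -
  have "0 < uD D ^ r" using uD_gt_1 by simp
  hence "real_of_int 0 < of_int (d_r D r)" using uD_power_lt_d_r[of r] by simp
  thus ?thesis by (simp only: of_int_less_iff)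
qed

lemma ord_mod_d_r:
  assumes "r \<ge> 1"
  shows "ord_mod D (d_r D r) (uD D) = 3 * r"
proof -
  define v where "v = uD D ^ r"
  define n where "n = ord_mod D (d_r D r) (uD D)"
  have v: "v \<in> ring_of_ints D" "v \<noteq> 0"
    using uD_ring_of_ints uD_gt_1 by (simp_all add: v_def ring_of_ints_power)
  have "cong_OK D (d_r D r) (uD D ^ (3 * r)) 1"
    using cong_OK_cube_one[OF v d_r_eq[of r, folded v_def]]
    by (simp add: v_def power_mult[symmetric] mult.commute)
  hence n: "n > 0" "cong_OK D (d_r D r) (uD D ^ n) 1" "n dvd 3 * r"
    using assms ord_mod_pos[of "3 * r"] cong_OK_power_ord_mod[of "3 * r"]
          ord_mod_dvd[OF uD_qunits, of "3 * r"]
    unfolding n_def by simp_all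
  have "\<not> n < 2 * r"
  proof
    assume "n < 2 * r"
    hence "uD D ^ n < v\<^sup>2"
      using uD_gt_1 by (simp add: v_def power_mult[symmetric] mult.commute)
    also have "v\<^sup>2 < (of_int (d_r D r))\<^sup>2"
      using uD_power_lt_d_r[of r] uD_gt_1 by (simp add: v_def power_strict_mono)
    finally have "\<not> cong_OK D (d_r D r) (uD D ^ n) 1"
      using n(1) uD_gt_1 uD_ring_of_ints qnorm_uD
      by (intro qnorm_one_not_cong_OK_one)
         (simp_all add: ring_of_ints_power qnorm_power ring_of_ints_qfield)
    thus False using n(2) by simp
  qed
  thus ?thesis
    using dvd_eq_of_less_double[OF n(3)] assms unfolding n_def by simp
qed

lemma ord_mod_double_d_r:
  assumes "r \<ge> 1" "even (d_r D r)"
  shows "ord_mod D (2 * d_r D r) (uD D) = 6 * r"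
proof -
  define v where "v = uD D ^ r"
  define n where "n = ord_mod D (2 * d_r D r) (uD D)"
  have v: "v \<in> ring_of_ints D" "v \<noteq> 0" "qnorm D v = 1"
    using uD_ring_of_ints uD_gt_1 qnorm_uD
    by (simp_all add: v_def ring_of_ints_power qnorm_power ring_of_ints_qfield)
  have v3: "uD D ^ (3 * r) = v ^ 3" and v6: "uD D ^ (6 * r) = (v ^ 3)\<^sup>2"
    unfolding v_def power_mult[symmetric] by (simp_all add: mult.commute)
  have "cong_OK D (2 * d_r D r) ((v ^ 3)\<^sup>2) 1"
    using cong_OK_cube_one[OF v(1,2) d_r_eq[of r, folded v_def]] assms(2)
    by (rule cong_OK_one_square_double)
  hence "cong_OK D (2 * d_r D r) (uD D ^ (6 * r)) 1"
    unfolding v6 .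
  hence n: "n > 0" "cong_OK D (2 * d_r D r) (uD D ^ n) 1" "n dvd 6 * r"
    using assms ord_mod_pos[of "6 * r"] cong_OK_power_ord_mod[of "6 * r"]
          ord_mod_dvd[OF uD_qunits, of "6 * r"]
    unfolding n_def by simp_all
  have cong_d: "cong_OK D (d_r D r) (uD D ^ n) 1"
    using n(2) by (rule cong_OK_mult_modulus[rotated]) simp
  have "3 * r dvd n"
    using ord_mod_dvd[OF uD_qunits n(1) cong_d] unfolding ord_mod_d_r[OF assms(1)] .
  then obtain k where k: "n = 3 * r * k" by blast
  have "k dvd 2"
    using n(3) assms(1) unfolding k by (simp add: mult.assoc)
  moreover have "k \<noteq> 1"
    using n(2) not_cong_OK_cube_one_double[OF v(1,3) d_r_eq[of r, folded v_def] assms(2)]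
    by (auto simp: k v3)
  ultimately have "k = 2"
    using dvd_imp_le[of k 2] by (cases k) (auto simp: numeral_2_eq_2 le_Suc_eq)
  thus ?thesis using k by (simp add: n_def)
qed

end

theorem mainTheorem6:
  fixes D r :: nat
  assumes "D \<ge> 2" and "squarefree D" and "r \<ge> 1"
  shows "real (ord_mod D (d_r' D r) (uD D))
           = 3 * real r * (real_of_int (d_r' D r) / real_of_int (d_r D r))"
proof -
  interpret real_quadratic_field D
    by unfold_locales (rule sqrt_nat_irrational[OF squarefree_not_square[OF assms(2,1)]])
  show ?thesis
  proof (cases "even (d_r D r)")
    case True
    thus ?thesis using d_r_pos[of r] ord_mod_double_d_r[OF assms(3)] by (simp add: d_r'_def)
  next
    case False
    thus ?thesis using d_r_pos[of r] ord_mod_d_r[OF assms(3)] by (simp add: d_r'_def)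
  qed
qed

end
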